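(* Let $X$ be a real random variable with $\mathbb{E}|X|^k<\infty$ for all $k=1,2,\dots$. For $i=0,1,2$ and $(y,a)\in\mathbb R^2$ let $h_i(y;a)=\mathbb{E}[X^i\varphi(y-aX)]$, and let $g_i(y;a)=\frac{\partial^i}{\partial a^i}\Big(\frac{h_1^2}{h_0}\Big)(y;a)$ for $i=0,1,2,\dots$. Then for every $i=0,1,2,\dots$ and all real $v<w$, the function $(y,a)\mapsto g_i(y;a)$ is (Lebesgue) integrable on $\mathbb{R}\times[v,w]$.
   Context: $\varphi(t)=(2\pi)^{-1/2}e^{-t^2/2}$ is the standard Gaussian density; $h_0(y;a)>0$ is the density of $aX+N$ with $N\sim\mathcal N(0,1)$ independent of $X$. *)

theory Defs
  imports "HOL-Probability.Probability"
begin

definition hfun :: "'s measure \<Rightarrow> ('s \<Rightarrow> real) \<Rightarrow> nat \<Rightarrow> real \<Rightarrow> real \<Rightarrow> real" where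
  "hfun M X i y a = (\<integral>\<omega>. X \<omega> ^ i * std_normal_density (y - a * X \<omega>) \<partial>M)"

definition gfun :: "'s measure \<Rightarrow> ('s \<Rightarrow> real) \<Rightarrow> nat \<Rightarrow> real \<Rightarrow> real \<Rightarrow> real" where
  "gfun M X i y a = (deriv ^^ i) (\<lambda>b. (hfun M X 1 y b)\<^sup>2 / hfun M X 0 y b) a"

end

theory Submission
  imports Defs
begin

text \<open>
  Write p_{j,k}(y;b) = E[X^j (y - bX)^k phi(y - bX)], so that h_i = p_{i,0}.  Since
  phi'(t) = -t phi(t), differentiation under the expectation gives
    d/db p_{j,k} = -k p_{j+1,k-1} + p_{j+1,k+1}.
  Hence every g_i is admissible: a finite sum of terms
    c * p_{j_0,k_0} ... p_{j_m,k_m} / p_{0,0}^m     (m+1 factors over m powers of h_0),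
  and this class is closed under d/db by the product and quotient rules (p_{0,0} = h_0 > 0).
  Each term is dominated by the envelope H_N(y;b) = E[(1+|X|)^N (1+|y-bX|)^N phi(y-bX)]:
  every factor is bounded by H_D, and a tangent-line (Jensen) argument gives
  H_D^(m+1) <= p_{0,0}^m H_{D(m+1)}.  Finally H_N is integrable over R x [v,w] by Tonelli:
  translating y removes the dependence on bX and leaves
  E[(1+|X|)^N] * (integral of (1+|t|)^N phi(t) dt) * (w - v) < infinity.
\<close>

lemma DERIV_std_normal_density: "DERIV std_normal_density t :> - t * std_normal_density t"
  unfolding std_normal_density_def
  by (auto intro!: derivative_eq_intros simp: power2_eq_square field_simps)

text \<open>Chain-rule form, so that the derivative method can differentiate phi(f(x)).\<close>
lemma DERIV_std_normal_density_chain [derivative_intros]: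
  "(f has_real_derivative f') (at x within s) \<Longrightarrow>
   ((\<lambda>x. std_normal_density (f x)) has_real_derivative
      (- f x * std_normal_density (f x) * f')) (at x within s)"
  using DERIV_chain2[OF DERIV_std_normal_density] by (simp add: mult.assoc)

lemma std_normal_density_le_1: "std_normal_density t \<le> 1"
proof -
  have "1 \<le> sqrt (2 * pi)" using pi_gt3 by (simp add: real_le_rsqrt)
  then have "std_normal_density t \<le> exp (- t\<^sup>2 / 2)"
    unfolding std_normal_density_def by (simp add: divide_le_eq mult_le_cancel_left1 order_trans)
  also have "\<dots> \<le> 1" by simp
  finally show ?thesis .
qed

lemma one_plus_abs_power_le: "(1 + \<bar>x::real\<bar>) ^ k \<le> 2 ^ k * (1 + \<bar>x\<bar> ^ k)"
proof (cases "\<bar>x\<bar> \<le> 1")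
  case True
  have "(1 + \<bar>x\<bar>) ^ k \<le> 2 ^ k" using True by (intro power_mono) auto
  also have "\<dots> \<le> 2 ^ k * (1 + \<bar>x\<bar> ^ k)" by simp
  finally show ?thesis .
next
  case False
  have "(1 + \<bar>x\<bar>) ^ k \<le> (2 * \<bar>x\<bar>) ^ k" using False by (intro power_mono) auto
  also have "\<dots> \<le> 2 ^ k * (1 + \<bar>x\<bar> ^ k)" by (simp add: power_mult_distrib)
  finally show ?thesis .
qed

lemma integrable_one_plus_abs_power_std_normal:
  "integrable lborel (\<lambda>t. (1 + \<bar>t\<bar>) ^ N * std_normal_density t)"
proof (rule Bochner_Integration.integrable_bound)
  show "integrable lborel (\<lambda>t. 2 ^ N * (std_normal_density t + std_normal_density t * \<bar>t\<bar> ^ N))"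
    by (intro integrable_mult_right Bochner_Integration.integrable_add
        integrable_std_normal_moment_abs integrable_normal_density) auto
  show "AE t in lborel. norm ((1 + \<bar>t\<bar>) ^ N * std_normal_density t)
      \<le> norm (2 ^ N * (std_normal_density t + std_normal_density t * \<bar>t\<bar> ^ N))"
  proof (rule AE_I2)
    fix t :: real
    have "(1 + \<bar>t\<bar>) ^ N * std_normal_density t \<le> 2 ^ N * (1 + \<bar>t\<bar> ^ N) * std_normal_density t"
      by (intro mult_right_mono one_plus_abs_power_le) auto
    then show "norm ((1 + \<bar>t\<bar>) ^ N * std_normal_density t)
        \<le> norm (2 ^ N * (std_normal_density t + std_normal_density t * \<bar>t\<bar> ^ N))"
      by (simp add: algebra_simps)
  qed
qed measurable

lemma DERIV_p_integrand:
  fixes x y :: real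
  shows "((\<lambda>t. x ^ j * (y - t * x) ^ k * std_normal_density (y - t * x)) has_real_derivative
      - real k * (x ^ Suc j * (y - t * x) ^ (k - 1) * std_normal_density (y - t * x))
      + x ^ Suc j * (y - t * x) ^ Suc k * std_normal_density (y - t * x)) (at t)"
proof -
  have "((\<lambda>t. x ^ j * (y - t * x) ^ k * std_normal_density (y - t * x)) has_real_derivative
      x ^ j * (real k * (y - t * x) ^ (k - 1) * (- x)) * std_normal_density (y - t * x)
      + x ^ j * (y - t * x) ^ k * (- (y - t * x) * std_normal_density (y - t * x) * (- x))) (at t)"
    by (auto intro!: derivative_eq_intros)
  then show ?thesis by (simp add: algebra_simps)
qed

lemma power_tangent_line_le:
  fixes a x :: real assumes "0 < a" "0 \<le> x"
  shows "a ^ n + real n * a ^ (n - 1) * (x - a) \<le> x ^ n"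
proof -
  have "1 + real n * (x / a - 1) \<le> (1 + (x / a - 1)) ^ n"
    by (rule Bernoulli_inequality) (use assms in auto)
  then have "a ^ n * (1 + real n * (x / a - 1)) \<le> a ^ n * (x / a) ^ n"
    using assms by (intro mult_left_mono) auto
  moreover have "a ^ n * (x / a) ^ n = x ^ n" using assms by (simp add: power_divide)
  moreover have "a ^ n * (1 + real n * (x / a - 1)) = a ^ n + real n * a ^ (n - 1) * (x - a)"
    using assms by (cases n) (simp_all add: field_simps)
  ultimately show ?thesis by simp
qed

text \<open>Proof: integrate the tangent line of
  x^n at the weighted mean a = (int G phi) / P.\<close>
lemma power_weighted_mean_le:
  fixes N :: "'a measure" and \<phi> G :: "'a \<Rightarrow> real"
  assumes int_\<phi>: "integrable N \<phi>"
    and int_G: "integrable N (\<lambda>\<omega>. G \<omega> * \<phi> \<omega>)"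
    and int_Gn: "integrable N (\<lambda>\<omega>. G \<omega> ^ Suc m * \<phi> \<omega>)"
    and nonneg: "\<And>\<omega>. 0 \<le> \<phi> \<omega>" "\<And>\<omega>. 0 \<le> G \<omega>"
    and mass: "0 < (\<integral>\<omega>. \<phi> \<omega> \<partial>N)"
  shows "(\<integral>\<omega>. G \<omega> * \<phi> \<omega> \<partial>N) ^ Suc m
    \<le> (\<integral>\<omega>. \<phi> \<omega> \<partial>N) ^ m * (\<integral>\<omega>. G \<omega> ^ Suc m * \<phi> \<omega> \<partial>N)"
proof -
  define n where "n = Suc m"
  define P where "P = (\<integral>\<omega>. \<phi> \<omega> \<partial>N)"
  define A where "A = (\<integral>\<omega>. G \<omega> * \<phi> \<omega> \<partial>N)"
  have P: "0 < P" unfolding P_def by (rule mass)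
  have rhs_nonneg: "0 \<le> P ^ m * (\<integral>\<omega>. G \<omega> ^ n * \<phi> \<omega> \<partial>N)"
    using P nonneg by (simp add: n_def)
  have "A ^ n \<le> P ^ m * (\<integral>\<omega>. G \<omega> ^ n * \<phi> \<omega> \<partial>N)"
  proof (cases "A = 0")
    case True
    then show ?thesis using rhs_nonneg by (simp add: n_def)
  next
    case False
    have "0 \<le> A" unfolding A_def using nonneg by simp
    define a where "a = A / P"
    have a: "0 < a" using P \<open>0 \<le> A\<close> False unfolding a_def by simp
    define tangent where "tangent \<omega> =
        (a ^ n - real n * a ^ (n - 1) * a) * \<phi> \<omega> + (real n * a ^ (n - 1)) * (G \<omega> * \<phi> \<omega>)" for \<omega>
    have int_tangent: "integrable N tangent" unfolding tangent_def using int_\<phi> int_G by simp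
    have "a ^ n * P = (a ^ n - real n * a ^ (n - 1) * a) * P + (real n * a ^ (n - 1)) * A"
      using P unfolding a_def by (simp add: algebra_simps)
    also have "\<dots> = (\<integral>\<omega>. tangent \<omega> \<partial>N)"
      unfolding P_def A_def tangent_def using int_\<phi> int_G by simp
    also have "\<dots> \<le> (\<integral>\<omega>. G \<omega> ^ n * \<phi> \<omega> \<partial>N)"
    proof (rule integral_mono[OF int_tangent int_Gn[folded n_def]])
      fix \<omega>
      have "tangent \<omega> = (a ^ n + real n * a ^ (n - 1) * (G \<omega> - a)) * \<phi> \<omega>"
        unfolding tangent_def by (simp add: algebra_simps)
      also have "\<dots> \<le> G \<omega> ^ n * \<phi> \<omega>"
        using power_tangent_line_le[OF a nonneg(2)] nonneg(1) by (intro mult_right_mono)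
      finally show "tangent \<omega> \<le> G \<omega> ^ n * \<phi> \<omega>" .
    qed
    finally have "a ^ n * P * P ^ m \<le> (\<integral>\<omega>. G \<omega> ^ n * \<phi> \<omega> \<partial>N) * P ^ m"
      using P by (intro mult_right_mono) auto
    moreover have "a ^ n * P * P ^ m = A ^ n" unfolding a_def n_def using P
      by (simp add: field_simps)
    ultimately show ?thesis by (simp add: mult.commute)
  qed
  then show ?thesis unfolding n_def A_def P_def .
qed

lemma monomial_le_power:
  fixes x u B :: real
  assumes "\<bar>x\<bar> \<le> B" "\<bar>u\<bar> \<le> B" "1 \<le> B" "a + c \<le> E"
  shows "\<bar>x\<bar> ^ a * \<bar>u\<bar> ^ c \<le> B ^ E"
proof -
  have "\<bar>x\<bar> ^ a * \<bar>u\<bar> ^ c \<le> B ^ a * B ^ c"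
    using assms by (intro mult_mono power_mono) auto
  also have "\<dots> = B ^ (a + c)" by (simp add: power_add)
  also have "\<dots> \<le> B ^ E" using assms by (intro power_increasing) auto
  finally show ?thesis .
qed

lemma difference_le_derivative_bound:
  fixes g g' :: "real \<Rightarrow> real"
  assumes deriv: "\<And>t. (g has_real_derivative g' t) (at t)"
    and bound: "\<And>t. \<bar>t - x\<bar> \<le> 1 \<Longrightarrow> \<bar>g' t\<bar> \<le> W"
    and t: "\<bar>t - x\<bar> \<le> 1"
  shows "\<bar>g t - g x\<bar> \<le> W * \<bar>t - x\<bar>"
proof -
  obtain z where z: "min t x \<le> z" "z \<le> max t x" "\<bar>g t - g x\<bar> = \<bar>t - x\<bar> * \<bar>g' z\<bar>"
  proof (cases t x rule: linorder_cases)
    case less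
    from MVT2[OF less deriv] obtain z where "t < z" "z < x" "g x - g t = (x - t) * g' z" by blast
    moreover have "\<bar>g t - g x\<bar> = \<bar>g x - g t\<bar>" by (rule abs_minus_commute)
    ultimately show ?thesis using less by (intro that[of z]) (auto simp: abs_mult)
  next
    case equal
    then show ?thesis by (intro that[of x]) auto
  next
    case greater
    from MVT2[OF greater deriv] obtain z where "x < z" "z < t" "g t - g x = (t - x) * g' z" by blast
    then show ?thesis using greater by (intro that[of z]) (auto simp: abs_mult)
  qed
  have "\<bar>g' z\<bar> \<le> W" using z t by (intro bound) auto
  then have "\<bar>t - x\<bar> * \<bar>g' z\<bar> \<le> \<bar>t - x\<bar> * W" by (rule mult_left_mono) simp
  then show ?thesis using z by (simp add: mult.commute)
qed

lemma integral_difference_quotients_tendsto: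
  fixes f f' :: "real \<Rightarrow> 'a \<Rightarrow> real" and M :: "'a measure"
  assumes fm: "\<And>t. f t \<in> borel_measurable M"
   and f'm: "f' x \<in> borel_measurable M"
   and wi: "integrable M w"
   and d: "\<And>t \<omega>. \<omega> \<in> space M \<Longrightarrow> ((\<lambda>t. f t \<omega>) has_real_derivative f' t \<omega>) (at t)"
   and b: "\<And>t \<omega>. \<omega> \<in> space M \<Longrightarrow> \<bar>t - x\<bar> \<le> 1 \<Longrightarrow> \<bar>f' t \<omega>\<bar> \<le> w \<omega>"
   and S: "\<And>i. S i \<noteq> x" "\<And>i. \<bar>S i - x\<bar> \<le> 1" "S \<longlonglongrightarrow> x"
  shows "(\<lambda>i. \<integral>\<omega>. (f (S i) \<omega> - f x \<omega>) / (S i - x) \<partial>M) \<longlonglongrightarrow> (\<integral>\<omega>. f' x \<omega> \<partial>M)"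
proof (rule integral_dominated_convergence[OF f'm _ wi])
  show "(\<lambda>\<omega>. (f (S i) \<omega> - f x \<omega>) / (S i - x)) \<in> borel_measurable M" for i
    using fm by measurable
  show "AE \<omega> in M. (\<lambda>i. (f (S i) \<omega> - f x \<omega>) / (S i - x)) \<longlonglongrightarrow> f' x \<omega>"
  proof (rule AE_I2)
    fix \<omega> assume \<omega>: "\<omega> \<in> space M"
    have "((\<lambda>t. (f t \<omega> - f x \<omega>) / (t - x)) \<longlongrightarrow> f' x \<omega>) (at x)"
      using d[OF \<omega>, of x] unfolding has_field_derivative_iff .
    then show "(\<lambda>i. (f (S i) \<omega> - f x \<omega>) / (S i - x)) \<longlonglongrightarrow> f' x \<omega>"
      unfolding tendsto_at_iff_sequentially comp_def using S by blast
  qed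
  show "AE \<omega> in M. norm ((f (S i) \<omega> - f x \<omega>) / (S i - x)) \<le> w \<omega>" for i
  proof (rule AE_I2)
    fix \<omega> assume \<omega>: "\<omega> \<in> space M"
    have "\<bar>f (S i) \<omega> - f x \<omega>\<bar> \<le> w \<omega> * \<bar>S i - x\<bar>"
      using difference_le_derivative_bound[of "\<lambda>t. f t \<omega>" "\<lambda>t. f' t \<omega>" x "w \<omega>" "S i"] d b \<omega> S
      by blast
    then show "norm ((f (S i) \<omega> - f x \<omega>) / (S i - x)) \<le> w \<omega>"
      using S(1)[of i] by (simp add: divide_le_eq)
  qed
qed

lemma DERIV_integral:
  fixes f f' :: "real \<Rightarrow> 'a \<Rightarrow> real" and M :: "'a measure"
  assumes fm: "\<And>t. f t \<in> borel_measurable M"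
   and f'm: "f' x \<in> borel_measurable M"
   and fi: "integrable M (f x)"
   and wi: "integrable M w"
   and d: "\<And>t \<omega>. \<omega> \<in> space M \<Longrightarrow> ((\<lambda>t. f t \<omega>) has_real_derivative f' t \<omega>) (at t)"
   and b: "\<And>t \<omega>. \<omega> \<in> space M \<Longrightarrow> \<bar>t - x\<bar> \<le> 1 \<Longrightarrow> \<bar>f' t \<omega>\<bar> \<le> w \<omega>"
  shows "((\<lambda>t. \<integral>\<omega>. f t \<omega> \<partial>M) has_real_derivative (\<integral>\<omega>. f' x \<omega> \<partial>M)) (at x)"
proof -
  have integrable_near: "integrable M (f t)" if t: "\<bar>t - x\<bar> \<le> 1" for t
  proof -
    have "integrable M (\<lambda>\<omega>. f t \<omega> - f x \<omega>)"
    proof (rule Bochner_Integration.integrable_bound[OF wi])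
      show "(\<lambda>\<omega>. f t \<omega> - f x \<omega>) \<in> borel_measurable M" using fm by measurable
      show "AE \<omega> in M. norm (f t \<omega> - f x \<omega>) \<le> norm (w \<omega>)"
      proof (rule AE_I2)
        fix \<omega> assume \<omega>: "\<omega> \<in> space M"
        have "\<bar>f t \<omega> - f x \<omega>\<bar> \<le> w \<omega> * \<bar>t - x\<bar>"
          by (rule difference_le_derivative_bound[where g'="\<lambda>t. f' t \<omega>"]) (use d b \<omega> t in auto)
        also have "\<dots> \<le> \<bar>w \<omega>\<bar> * 1"
          using t by (intro mult_mono) auto
        finally show "norm (f t \<omega> - f x \<omega>) \<le> norm (w \<omega>)" by simp
      qed
    qed
    from Bochner_Integration.integrable_add[OF this fi] show ?thesis by simp
  qed
  show ?thesis
    unfolding has_field_derivative_iff tendsto_at_iff_sequentially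
  proof (intro allI impI)
    fix S :: "nat \<Rightarrow> real"
    assume S: "\<forall>i. S i \<in> UNIV - {x}" and Sl: "S \<longlonglongrightarrow> x"
    from Sl have "eventually (\<lambda>i. dist (S i) x < 1) sequentially"
      by (rule tendstoD) simp
    then obtain N where N: "\<And>i. i \<ge> N \<Longrightarrow> \<bar>S i - x\<bar> < 1"
      by (auto simp: eventually_sequentially dist_real_def)
    have lim: "(\<lambda>i. \<integral>\<omega>. (f (S (i + N)) \<omega> - f x \<omega>) / (S (i + N) - x) \<partial>M) \<longlonglongrightarrow> (\<integral>\<omega>. f' x \<omega> \<partial>M)"
    proof (rule integral_difference_quotients_tendsto[OF fm f'm wi d b])
      show "S (i + N) \<noteq> x" "\<bar>S (i + N) - x\<bar> \<le> 1" for i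
        using S N[of "i + N"] by auto
      show "(\<lambda>i. S (i + N)) \<longlonglongrightarrow> x" by (rule LIMSEQ_ignore_initial_segment[OF Sl])
    qed
    have eq: "(\<integral>\<omega>. (f (S (i + N)) \<omega> - f x \<omega>) / (S (i + N) - x) \<partial>M)
        = ((\<lambda>t. ((\<integral>\<omega>. f t \<omega> \<partial>M) - (\<integral>\<omega>. f x \<omega> \<partial>M)) / (t - x)) \<circ> S) (i + N)" for i
    proof -
      have "integrable M (f (S (i + N)))" using integrable_near N[of "i + N"] by auto
      then show ?thesis using fi by simp
    qed
    from lim show "((\<lambda>t. ((\<integral>\<omega>. f t \<omega> \<partial>M) - (\<integral>\<omega>. f x \<omega> \<partial>M)) / (t - x)) \<circ> S)
        \<longlonglongrightarrow> (\<integral>\<omega>. f' x \<omega> \<partial>M)"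
      unfolding eq by (rule LIMSEQ_offset)
  qed
qed

section \<open>Gaussian-weighted moments of a random variable with all moments finite\<close>

locale all_moments = prob_space M for M :: "'s measure" +
  fixes X :: "'s \<Rightarrow> real"
  assumes X_measurable [measurable]: "X \<in> borel_measurable M"
    and moments: "\<And>k::nat. k \<ge> 1 \<Longrightarrow> integrable M (\<lambda>\<omega>. \<bar>X \<omega>\<bar> ^ k)"
begin

lemma integrable_scaled_power: "integrable M (\<lambda>\<omega>. (C * (1 + \<bar>X \<omega>\<bar>)) ^ k)"
proof -
  have "integrable M (\<lambda>\<omega>. (1 + \<bar>X \<omega>\<bar>) ^ k)"
  proof (rule Bochner_Integration.integrable_bound)
    show "integrable M (\<lambda>\<omega>. 2 ^ k * (1 + \<bar>X \<omega>\<bar> ^ k))"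
      using moments[of k] by (cases "k = 0") auto
    show "AE \<omega> in M. norm ((1 + \<bar>X \<omega>\<bar>) ^ k) \<le> norm (2 ^ k * (1 + \<bar>X \<omega>\<bar> ^ k))"
      using one_plus_abs_power_le by (intro AE_I2) simp
  qed measurable
  then show ?thesis unfolding power_mult_distrib by (rule integrable_mult_right)
qed

definition p :: "nat \<Rightarrow> nat \<Rightarrow> real \<Rightarrow> real \<Rightarrow> real" where
  "p j k y b = (\<integral>\<omega>. X \<omega> ^ j * (y - b * X \<omega>) ^ k * std_normal_density (y - b * X \<omega>) \<partial>M)"

lemma hfun_eq_p: "hfun M X i y b = p i 0 y b"
  by (simp add: hfun_def p_def)

lemma one_plus_abs_affine_le:
  fixes t b y x :: real
  assumes "\<bar>t - b\<bar> \<le> 1"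
  shows "1 + \<bar>y - t * x\<bar> \<le> (2 + \<bar>y\<bar> + \<bar>b\<bar>) * (1 + \<bar>x\<bar>)"
proof -
  have "\<bar>t\<bar> \<le> 1 + \<bar>b\<bar>" using assms by arith
  have "\<bar>y - t * x\<bar> \<le> \<bar>y\<bar> + \<bar>t\<bar> * \<bar>x\<bar>"
    by (simp add: abs_mult order_trans[OF abs_triangle_ineq4])
  also have "\<dots> \<le> \<bar>y\<bar> + (1 + \<bar>b\<bar>) * \<bar>x\<bar>"
    using \<open>\<bar>t\<bar> \<le> 1 + \<bar>b\<bar>\<close> by (intro add_left_mono mult_right_mono) auto
  also have "\<dots> \<le> (2 + \<bar>y\<bar> + \<bar>b\<bar>) * (1 + \<bar>x\<bar>) - 1"
    by (simp add: algebra_simps)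
  finally show ?thesis by simp
qed

text \<open>Hence the integrand of p is dominated by a polynomial in |X|, uniformly for t near b;
  this gives both integrability and the domination needed to differentiate under E.\<close>
lemma p_integrand_bound:
  fixes t b y x :: real
  assumes "\<bar>t - b\<bar> \<le> 1" "j + k \<le> E"
  shows "\<bar>x ^ j * (y - t * x) ^ k * std_normal_density (y - t * x)\<bar>
    \<le> ((2 + \<bar>y\<bar> + \<bar>b\<bar>) * (1 + \<bar>x\<bar>)) ^ E"
proof -
  have "\<bar>x\<bar> ^ j * \<bar>y - t * x\<bar> ^ k \<le> ((2 + \<bar>y\<bar> + \<bar>b\<bar>) * (1 + \<bar>x\<bar>)) ^ E"
    using one_plus_abs_affine_le[OF assms(1), of y x] assms(2)
    by (intro monomial_le_power) (auto simp: algebra_simps)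
  moreover have "\<bar>x ^ j * (y - t * x) ^ k * std_normal_density (y - t * x)\<bar>
      = \<bar>x\<bar> ^ j * \<bar>y - t * x\<bar> ^ k * std_normal_density (y - t * x)"
    by (simp add: abs_mult power_abs)
  moreover have "\<dots> \<le> \<bar>x\<bar> ^ j * \<bar>y - t * x\<bar> ^ k"
    using mult_left_mono[OF std_normal_density_le_1] by simp
  ultimately show ?thesis by simp
qed

lemma integrable_p_integrand:
  "integrable M (\<lambda>\<omega>. X \<omega> ^ j * (y - b * X \<omega>) ^ k * std_normal_density (y - b * X \<omega>))"
  by (rule Bochner_Integration.integrable_bound[OF integrable_scaled_power[of "2 + \<bar>y\<bar> + \<bar>b\<bar>" "j + k"]])
     (use p_integrand_bound[of b b j k "j + k"] in auto)

lemma DERIV_p: "DERIV (\<lambda>b. p j k y b) b :> - real k * p (Suc j) (k - 1) y b + p (Suc j) (Suc k) y b"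
proof -
  define f where "f t \<omega> = X \<omega> ^ j * (y - t * X \<omega>) ^ k * std_normal_density (y - t * X \<omega>)" for t \<omega>
  define f' where "f' t \<omega> =
      - real k * (X \<omega> ^ Suc j * (y - t * X \<omega>) ^ (k - 1) * std_normal_density (y - t * X \<omega>))
      + X \<omega> ^ Suc j * (y - t * X \<omega>) ^ Suc k * std_normal_density (y - t * X \<omega>)" for t \<omega>
  define w where "w \<omega> = real (k + 1) * ((2 + \<bar>y\<bar> + \<bar>b\<bar>) * (1 + \<bar>X \<omega>\<bar>)) ^ (j + k + 2)" for \<omega>
  have "((\<lambda>t. \<integral>\<omega>. f t \<omega> \<partial>M) has_real_derivative (\<integral>\<omega>. f' b \<omega> \<partial>M)) (at b)"
  proof (rule DERIV_integral[where w=w])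
    show "\<And>t. f t \<in> borel_measurable M" "f' b \<in> borel_measurable M"
      unfolding f_def f'_def by measurable
    show "integrable M (f b)" unfolding f_def by (rule integrable_p_integrand)
    show "integrable M w" unfolding w_def by (intro integrable_mult_right integrable_scaled_power)
    show "((\<lambda>t. f t \<omega>) has_real_derivative f' t \<omega>) (at t)" for t \<omega>
      unfolding f_def f'_def by (rule DERIV_p_integrand)
    show "\<bar>f' t \<omega>\<bar> \<le> w \<omega>" if "\<bar>t - b\<bar> \<le> 1" for t \<omega>
    proof -
      let ?B = "((2 + \<bar>y\<bar> + \<bar>b\<bar>) * (1 + \<bar>X \<omega>\<bar>)) ^ (j + k + 2)"
      have bound_lower: "\<bar>X \<omega> ^ Suc j * (y - t * X \<omega>) ^ (k - 1) * std_normal_density (y - t * X \<omega>)\<bar> \<le> ?B"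
        and bound_upper: "\<bar>X \<omega> ^ Suc j * (y - t * X \<omega>) ^ Suc k * std_normal_density (y - t * X \<omega>)\<bar> \<le> ?B"
        by (rule p_integrand_bound[OF that]; simp)+
      have "\<bar>f' t \<omega>\<bar> \<le> real k * \<bar>X \<omega> ^ Suc j * (y - t * X \<omega>) ^ (k - 1) * std_normal_density (y - t * X \<omega>)\<bar>
          + \<bar>X \<omega> ^ Suc j * (y - t * X \<omega>) ^ Suc k * std_normal_density (y - t * X \<omega>)\<bar>"
        unfolding f'_def by (metis (no_types, lifting) abs_minus_cancel abs_mult abs_of_nat abs_triangle_ineq mult_minus_left)
      also have "\<dots> \<le> real k * ?B + ?B"
        using bound_lower bound_upper by (intro add_mono mult_left_mono) auto
      also have "\<dots> = w \<omega>" unfolding w_def by (simp add: algebra_simps)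
      finally show ?thesis .
    qed
  qed
  moreover have "(\<integral>\<omega>. f' b \<omega> \<partial>M) = - real k * p (Suc j) (k - 1) y b + p (Suc j) (Suc k) y b"
    unfolding f'_def p_def
    by (simp only: Bochner_Integration.integral_add integrable_mult_right integrable_p_integrand
        integral_mult_right_zero)
  ultimately show ?thesis unfolding f_def p_def by simp
qed

lemma p00_pos: "0 < p 0 0 y b"
proof -
  have integrable_density: "integrable M (\<lambda>\<omega>. std_normal_density (y - b * X \<omega>))"
    using integrable_p_integrand[of 0 y b 0] by simp
  have "p 0 0 y b \<noteq> 0"
  proof
    assume "p 0 0 y b = 0"
    then have "AE \<omega> in M. std_normal_density (y - b * X \<omega>) = 0"
      using integral_nonneg_eq_0_iff_AE[OF integrable_density] unfolding p_def by simp
    then have "AE \<omega> in M. False"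
      by eventually_elim (metis less_irrefl normal_density_pos zero_less_one)
    then show False by simp
  qed
  moreover have "0 \<le> p 0 0 y b" unfolding p_def by (simp add: integral_nonneg_AE)
  ultimately show ?thesis by simp
qed

subsection \<open>Admissible functions and their derivatives\<close>

definition prod_p :: "(nat \<times> nat) list \<Rightarrow> real \<Rightarrow> real \<Rightarrow> real" where
  "prod_p js y b = (\<Prod>(j, k) \<leftarrow> js. p j k y b)"

lemma prod_p_Nil [simp]: "prod_p [] y b = 1"
  and prod_p_Cons [simp]: "prod_p ((j, k) # js) y b = p j k y b * prod_p js y b"
  and prod_p_append: "prod_p (js @ ks) y b = prod_p js y b * prod_p ks y b"
  by (simp_all add: prod_p_def)

text \<open>Homogeneous polynomials of degree n in the moment functions.\<close>
inductive p_poly :: "nat \<Rightarrow> (real \<Rightarrow> real \<Rightarrow> real) \<Rightarrow> bool" where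
  monomial: "length js = n \<Longrightarrow> p_poly n (\<lambda>y b. c * prod_p js y b)"
| add: "p_poly n f \<Longrightarrow> p_poly n g \<Longrightarrow> p_poly n (\<lambda>y b. f y b + g y b)"

inductive admissible :: "(real \<Rightarrow> real \<Rightarrow> real) \<Rightarrow> bool" where
  fraction: "length js = Suc m \<Longrightarrow> admissible (\<lambda>y b. c * prod_p js y b / p 0 0 y b ^ m)"
| add: "admissible f \<Longrightarrow> admissible g \<Longrightarrow> admissible (\<lambda>y b. f y b + g y b)"

lemma p_poly_mult_p: "p_poly n F \<Longrightarrow> p_poly (Suc n) (\<lambda>y b. p j k y b * F y b)"
proof (induction rule: p_poly.induct)
  case (monomial js n c)
  have "p_poly (Suc n) (\<lambda>y b. c * prod_p ((j, k) # js) y b)"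
    by (rule p_poly.monomial) (use monomial in simp)
  then show ?case by (simp add: algebra_simps)
next
  case (add n f g)
  then show ?case using p_poly.add[OF add.IH] by (simp add: distrib_left)
qed

lemma p_poly_scale: "p_poly n F \<Longrightarrow> p_poly n (\<lambda>y b. c * F y b)"
proof (induction rule: p_poly.induct)
  case (monomial js n c')
  then show ?case using p_poly.monomial[of js n "c * c'"] by (simp add: mult.assoc)
next
  case (add n f g)
  then show ?case using p_poly.add[OF add.IH] by (simp add: distrib_left)
qed

lemma p_poly_divide: "p_poly (Suc m) F \<Longrightarrow> admissible (\<lambda>y b. F y b / p 0 0 y b ^ m)"
proof (induction "Suc m" F rule: p_poly.induct)
  case (monomial js c)
  then show ?case by (intro admissible.fraction)
next
  case (add f g)
  then show ?case using admissible.add[OF add.hyps(2,4)] by (simp add: add_divide_distrib)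
qed

lemma DERIV_prod_p: "\<exists>F. p_poly (length js) F \<and> (\<forall>y b. DERIV (prod_p js y) b :> F y b)"
proof (induction js)
  case Nil
  have "p_poly 0 (\<lambda>y b. 0 * prod_p [] y b)" by (rule p_poly.monomial) simp
  then show ?case by (intro exI[of _ "\<lambda>y b. 0 * prod_p [] y b"]) auto
next
  case (Cons jk rest)
  obtain j k where jk: "jk = (j, k)" by (cases jk)
  from Cons obtain F where F: "p_poly (length rest) F" "\<And>y b. DERIV (prod_p rest y) b :> F y b"
    by blast
  define G where "G y b = (- real k) * prod_p ((Suc j, k - 1) # rest) y b
      + (1 * prod_p ((Suc j, Suc k) # rest) y b + p j k y b * F y b)" for y b
  have "p_poly (Suc (length rest)) G"
    unfolding G_def by (intro p_poly.add p_poly.monomial p_poly_mult_p F) auto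
  moreover have "DERIV (prod_p (jk # rest) y) b :> G y b" for y b
  proof -
    have "prod_p ((j, k) # rest) y = (\<lambda>b. p j k y b * prod_p rest y b)" by (rule ext) simp
    with DERIV_mult[OF DERIV_p F(2)] show ?thesis
      unfolding G_def jk by (simp add: algebra_simps)
  qed
  ultimately show ?case unfolding jk length_Cons by blast
qed

text \<open>Quotient rule: the admissible class is closed under d/db.  Differentiating
  h_0^(-m) produces one more factor p 1 1 = d h_0/db and one more power of h_0.\<close>
lemma DERIV_admissible: "admissible f \<Longrightarrow> \<exists>f'. admissible f' \<and> (\<forall>y b. DERIV (f y) b :> f' y b)"
proof (induction rule: admissible.induct)
  case (fraction js m c)
  obtain F where F: "p_poly (length js) F" "\<And>y b. DERIV (prod_p js y) b :> F y b"
    using DERIV_prod_p by blast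
  define G where "G y b = (c * F y b) / p 0 0 y b ^ m
     + (- (c * real m)) * prod_p (js @ [(1, 1)]) y b / p 0 0 y b ^ Suc m" for y b
  have "admissible G"
    unfolding G_def
  proof (rule admissible.add)
    show "admissible (\<lambda>y b. c * F y b / p 0 0 y b ^ m)"
      using p_poly_divide p_poly_scale F(1) fraction by simp
    show "admissible (\<lambda>y b. - (c * real m) * prod_p (js @ [(1, 1)]) y b / p 0 0 y b ^ Suc m)"
      by (rule admissible.fraction) (use fraction in simp)
  qed
  moreover have "DERIV (\<lambda>b. c * prod_p js y b / p 0 0 y b ^ m) b :> G y b" for y b
  proof -
    have pos: "0 < p 0 0 y b" by (rule p00_pos)
    have "DERIV (\<lambda>b. p 0 0 y b ^ m) b :> real m * p 0 0 y b ^ (m - 1) * p 1 1 y b"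
      using DERIV_power[OF DERIV_p[of 0 0 y b], of m] by (simp add: algebra_simps)
    from DERIV_divide[OF DERIV_cmult[OF F(2)] this, of c] pos
    have "DERIV (\<lambda>b. c * prod_p js y b / p 0 0 y b ^ m) b :>
       ((c * F y b) * p 0 0 y b ^ m - c * prod_p js y b * (real m * p 0 0 y b ^ (m - 1) * p 1 1 y b))
         / (p 0 0 y b ^ m * p 0 0 y b ^ m)"
      by simp
    moreover have "((c * F y b) * p 0 0 y b ^ m
          - c * prod_p js y b * (real m * p 0 0 y b ^ (m - 1) * p 1 1 y b))
         / (p 0 0 y b ^ m * p 0 0 y b ^ m) = G y b"
      using pos unfolding G_def prod_p_append
      by (cases m) (simp_all add: field_simps)
    ultimately show ?thesis by simp
  qed
  ultimately show ?case by blast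
next
  case (add f g)
  then obtain f' g' where "admissible f'" "\<And>y b. DERIV (f y) b :> f' y b"
    and "admissible g'" "\<And>y b. DERIV (g y) b :> g' y b"
    by blast
  then show ?case
    by (intro exI[of _ "\<lambda>y b. f' y b + g' y b"]) (auto intro: admissible.add DERIV_add)
qed

lemma gfun_admissible: "\<exists>f. admissible f \<and> (\<forall>y a. gfun M X i y a = f y a)"
proof (induction i)
  case 0
  have "admissible (\<lambda>y b. 1 * prod_p [(1, 0), (1, 0)] y b / p 0 0 y b ^ 1)"
    by (rule admissible.fraction) simp
  then show ?case
    by (intro exI[of _ "\<lambda>y b. 1 * prod_p [(1, 0), (1, 0)] y b / p 0 0 y b ^ 1"])
       (simp add: gfun_def hfun_eq_p power2_eq_square)
next
  case (Suc i)
  then obtain f where f: "admissible f" "\<And>y a. gfun M X i y a = f y a" by blast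
  obtain f' where f': "admissible f'" "\<And>y b. DERIV (f y) b :> f' y b"
    using DERIV_admissible[OF f(1)] by blast
  have "(deriv ^^ i) (\<lambda>b. (hfun M X 1 y b)\<^sup>2 / hfun M X 0 y b) = f y" for y
    using f(2) unfolding gfun_def by auto
  then have "gfun M X (Suc i) y a = f' y a" for y a
    unfolding gfun_def using f'(2) by (simp add: DERIV_imp_deriv)
  then show ?case using f'(1) by blast
qed

subsection \<open>Domination of admissible terms by the envelope\<close>

definition envelope_integrand :: "nat \<Rightarrow> real \<Rightarrow> real \<Rightarrow> 's \<Rightarrow> real" where
  "envelope_integrand N y b \<omega> =
    (1 + \<bar>X \<omega>\<bar>) ^ N * (1 + \<bar>y - b * X \<omega>\<bar>) ^ N * std_normal_density (y - b * X \<omega>)"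

definition envelope :: "nat \<Rightarrow> real \<Rightarrow> real \<Rightarrow> real" where
  "envelope N y b = (\<integral>\<omega>. envelope_integrand N y b \<omega> \<partial>M)"

lemma envelope_integrand_nonneg: "0 \<le> envelope_integrand N y b \<omega>"
  unfolding envelope_integrand_def by simp

lemma envelope_nonneg: "0 \<le> envelope N y b"
  unfolding envelope_def by (simp add: envelope_integrand_nonneg)

text \<open>The envelope is finite: its integrand grows polynomially in |X|.\<close>
lemma integrable_envelope_integrand: "integrable M (envelope_integrand N y b)"
proof (rule Bochner_Integration.integrable_bound[OF integrable_scaled_power[of "2 + \<bar>y\<bar> + \<bar>b\<bar>" "2 * N"]])
  show "envelope_integrand N y b \<in> borel_measurable M"
    unfolding envelope_integrand_def by measurable
  show "AE \<omega> in M. norm (envelope_integrand N y b \<omega>) \<le> norm (((2 + \<bar>y\<bar> + \<bar>b\<bar>) * (1 + \<bar>X \<omega>\<bar>)) ^ (2 * N))"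
  proof (rule AE_I2)
    fix \<omega>
    let ?B = "(2 + \<bar>y\<bar> + \<bar>b\<bar>) * (1 + \<bar>X \<omega>\<bar>)"
    have "\<bar>1 + \<bar>X \<omega>\<bar>\<bar> ^ N * \<bar>1 + \<bar>y - b * X \<omega>\<bar>\<bar> ^ N \<le> ?B ^ (2 * N)"
      using one_plus_abs_affine_le[of b b y "X \<omega>"]
      by (intro monomial_le_power) (auto simp: algebra_simps)
    moreover have "envelope_integrand N y b \<omega> \<le> (1 + \<bar>X \<omega>\<bar>) ^ N * (1 + \<bar>y - b * X \<omega>\<bar>) ^ N"
      unfolding envelope_integrand_def using mult_left_mono[OF std_normal_density_le_1] by simp
    ultimately show "norm (envelope_integrand N y b \<omega>) \<le> norm (?B ^ (2 * N))"
      using envelope_integrand_nonneg[of N y b \<omega>] by simp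
  qed
qed

lemma abs_p_le_envelope:
  assumes "j \<le> D" "k \<le> D"
  shows "\<bar>p j k y b\<bar> \<le> envelope D y b"
proof -
  have "\<bar>p j k y b\<bar> \<le> (\<integral>\<omega>. \<bar>X \<omega> ^ j * (y - b * X \<omega>) ^ k * std_normal_density (y - b * X \<omega>)\<bar> \<partial>M)"
    unfolding p_def by (rule integral_abs_bound)
  also have "\<dots> \<le> envelope D y b" unfolding envelope_def
  proof (rule integral_mono[OF integrable_abs[OF integrable_p_integrand] integrable_envelope_integrand])
    fix \<omega>
    have "\<bar>X \<omega>\<bar> ^ j \<le> (1 + \<bar>X \<omega>\<bar>) ^ D" "\<bar>y - b * X \<omega>\<bar> ^ k \<le> (1 + \<bar>y - b * X \<omega>\<bar>) ^ D"
      using assms by (intro order_trans[OF power_mono power_increasing]; simp)+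
    then show "\<bar>X \<omega> ^ j * (y - b * X \<omega>) ^ k * std_normal_density (y - b * X \<omega>)\<bar>
        \<le> envelope_integrand D y b \<omega>"
      unfolding envelope_integrand_def abs_mult power_abs
      by (intro mult_right_mono mult_mono) auto
  qed
  finally show ?thesis .
qed

lemma abs_prod_p_le_envelope:
  assumes "\<forall>(j, k) \<in> set js. j \<le> D \<and> k \<le> D"
  shows "\<bar>prod_p js y b\<bar> \<le> envelope D y b ^ length js"
  using assms
proof (induction js)
  case Nil
  then show ?case by simp
next
  case (Cons jk rest)
  obtain j k where jk: "jk = (j, k)" by (cases jk)
  have "\<bar>prod_p (jk # rest) y b\<bar> = \<bar>p j k y b\<bar> * \<bar>prod_p rest y b\<bar>"
    by (simp add: jk abs_mult)
  also have "\<dots> \<le> envelope D y b * envelope D y b ^ length rest"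
    using Cons abs_p_le_envelope[of j D k y b] jk envelope_nonneg by (intro mult_mono) auto
  finally show ?case by simp
qed

text \<open>Jensen's inequality with weight phi(y - bX) dM, of mass p 0 0 = h_0, applied to
  G = (1+|X|)^D (1+|y-bX|)^D.\<close>
lemma envelope_power_le: "envelope D y b ^ Suc m \<le> p 0 0 y b ^ m * envelope (D * Suc m) y b"
proof -
  define G where "G \<omega> = (1 + \<bar>X \<omega>\<bar>) ^ D * (1 + \<bar>y - b * X \<omega>\<bar>) ^ D" for \<omega>
  define \<phi> where "\<phi> \<omega> = std_normal_density (y - b * X \<omega>)" for \<omega>
  have p00_eq: "p 0 0 y b = (\<integral>\<omega>. \<phi> \<omega> \<partial>M)" unfolding p_def \<phi>_def by simp
  have envelope_eq: "envelope (D * k) y b = (\<integral>\<omega>. G \<omega> ^ k * \<phi> \<omega> \<partial>M)" for k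
    unfolding envelope_def envelope_integrand_def G_def \<phi>_def
    by (simp add: power_mult power_mult_distrib mult.commute)
  have integrable_G: "integrable M (\<lambda>\<omega>. G \<omega> ^ k * \<phi> \<omega>)" for k
    using integrable_envelope_integrand[of "D * k" y b]
    unfolding envelope_integrand_def G_def \<phi>_def by (simp add: power_mult power_mult_distrib mult.commute)
  have "envelope D y b ^ Suc m = (\<integral>\<omega>. G \<omega> * \<phi> \<omega> \<partial>M) ^ Suc m"
    using envelope_eq[of 1] by simp
  also have "\<dots> \<le> (\<integral>\<omega>. \<phi> \<omega> \<partial>M) ^ m * (\<integral>\<omega>. G \<omega> ^ Suc m * \<phi> \<omega> \<partial>M)"
    using integrable_G[of 0] integrable_G[of 1] integrable_G[of "Suc m"] p00_pos[of y b]
    by (intro power_weighted_mean_le) (auto simp: G_def \<phi>_def p00_eq)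
  finally show ?thesis unfolding p00_eq envelope_eq .
qed

lemma fraction_bound:
  assumes "length js = Suc m"
  shows "\<bar>prod_p js y b / p 0 0 y b ^ m\<bar> \<le> envelope (sum_list (map (\<lambda>(j, k). j + k) js) * Suc m) y b"
proof -
  define D where "D = sum_list (map (\<lambda>(j, k). j + k) js)"
  have "\<forall>(j, k) \<in> set js. j \<le> D \<and> k \<le> D"
  proof (intro ballI, clarify)
    fix j k assume "(j, k) \<in> set js"
    then have "j + k \<le> D"
      unfolding D_def using member_le_sum_list[of "j + k" "map (\<lambda>(j, k). j + k) js"] by force
    then show "j \<le> D \<and> k \<le> D" by simp
  qed
  from abs_prod_p_le_envelope[OF this] assms
  have "\<bar>prod_p js y b\<bar> \<le> envelope D y b ^ Suc m" by simp
  also have "\<dots> \<le> p 0 0 y b ^ m * envelope (D * Suc m) y b" by (rule envelope_power_le)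
  finally show ?thesis
    using p00_pos[of y b] unfolding D_def by (simp add: divide_le_eq mult.commute)
qed

subsection \<open>Integrability over a strip\<close>

lemma p_measurable [measurable]: "(\<lambda>z. p j k (fst z) (snd z)) \<in> borel_measurable (lborel \<Otimes>\<^sub>M lborel)"
  unfolding p_def by measurable

lemma prod_p_measurable [measurable]:
  "(\<lambda>z. prod_p js (fst z) (snd z)) \<in> borel_measurable (lborel \<Otimes>\<^sub>M lborel)"
proof (induction js)
  case Nil
  then show ?case by simp
next
  case (Cons jk rest)
  then show ?case by (cases jk) simp
qed

lemma envelope_measurable [measurable]:
  "(\<lambda>z. envelope N (fst z) (snd z)) \<in> borel_measurable (lborel \<Otimes>\<^sub>M lborel)"
  unfolding envelope_def envelope_integrand_def by measurable

text \<open>For a fixed sample point, the integral of the envelope integrand over the strip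
  factorises: the substitution y = t + bX removes the dependence on b.\<close>
lemma nn_integral_envelope_integrand_strip:
  assumes "v \<le> w"
  shows "(\<integral>\<^sup>+z. ennreal (indicator {v..w} (snd z) * envelope_integrand N (fst z) (snd z) \<omega>) \<partial>(lborel \<Otimes>\<^sub>M lborel))
    = ennreal ((1 + \<bar>X \<omega>\<bar>) ^ N) * (\<integral>\<^sup>+t. ennreal ((1 + \<bar>t\<bar>) ^ N * std_normal_density t) \<partial>lborel)
      * ennreal (w - v)"
proof -
  define g where "g t = (1 + \<bar>t\<bar>) ^ N * std_normal_density t" for t
  have [measurable]: "g \<in> borel_measurable borel" unfolding g_def by measurable
  have inner: "(\<integral>\<^sup>+y. ennreal (envelope_integrand N y b \<omega>) \<partial>lborel)
      = ennreal ((1 + \<bar>X \<omega>\<bar>) ^ N) * (\<integral>\<^sup>+t. ennreal (g t) \<partial>lborel)" for b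
  proof -
    have "(\<integral>\<^sup>+y. ennreal (envelope_integrand N y b \<omega>) \<partial>lborel)
        = (\<integral>\<^sup>+y. ennreal ((1 + \<bar>X \<omega>\<bar>) ^ N) * ennreal (g (y - b * X \<omega>)) \<partial>lborel)"
      by (intro nn_integral_cong) (auto simp: envelope_integrand_def g_def ennreal_mult mult.assoc)
    also have "\<dots> = ennreal ((1 + \<bar>X \<omega>\<bar>) ^ N) * (\<integral>\<^sup>+y. ennreal (g (y - b * X \<omega>)) \<partial>lborel)"
      by (rule nn_integral_cmult) measurable
    also have "(\<integral>\<^sup>+y. ennreal (g (y - b * X \<omega>)) \<partial>lborel) = (\<integral>\<^sup>+t. ennreal (g t) \<partial>lborel)"
      using nn_integral_real_affine[of "\<lambda>y. ennreal (g (y - b * X \<omega>))" 1 "b * X \<omega>"] by simp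
    finally show ?thesis .
  qed
  have "(\<integral>\<^sup>+z. ennreal (indicator {v..w} (snd z) * envelope_integrand N (fst z) (snd z) \<omega>) \<partial>(lborel \<Otimes>\<^sub>M lborel))
      = (\<integral>\<^sup>+b. \<integral>\<^sup>+y. ennreal (indicator {v..w} b * envelope_integrand N y b \<omega>) \<partial>lborel \<partial>lborel)"
    by (subst lborel_pair.nn_integral_snd[symmetric]) (auto simp: envelope_integrand_def)
  also have "\<dots> = (\<integral>\<^sup>+b. (ennreal ((1 + \<bar>X \<omega>\<bar>) ^ N) * (\<integral>\<^sup>+t. ennreal (g t) \<partial>lborel))
      * indicator {v..w} b \<partial>lborel)"
    by (intro nn_integral_cong) (auto split: split_indicator simp: inner)
  also have "\<dots> = ennreal ((1 + \<bar>X \<omega>\<bar>) ^ N) * (\<integral>\<^sup>+t. ennreal (g t) \<partial>lborel) * ennreal (w - v)"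
    using assms by (simp add: nn_integral_cmult_indicator)
  finally show ?thesis unfolding g_def .
qed

text \<open>Tonelli: the envelope is integrable over R x [v,w], with integral
  E[(1+|X|)^N] * (integral of (1+|t|)^N phi(t)) * (w - v).\<close>
lemma envelope_set_integrable:
  assumes "v \<le> w"
  shows "set_integrable (lborel \<Otimes>\<^sub>M lborel) (UNIV \<times> {v..w}) (\<lambda>(y, b). envelope N y b)"
proof -
  interpret LM: pair_sigma_finite "lborel \<Otimes>\<^sub>M lborel" M
    by (simp add: pair_sigma_finite_def sigma_finite_pair_measure
        lborel.sigma_finite_measure_axioms sigma_finite_measure_axioms)
  define Kg where "Kg = (\<integral>\<^sup>+t. ennreal ((1 + \<bar>t\<bar>) ^ N * std_normal_density t) \<partial>lborel)"
  have Kg_finite: "Kg < \<infinity>"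
    using integrableD(2)[OF integrable_one_plus_abs_power_std_normal] unfolding Kg_def
    by (simp add: less_top)
  have X_finite: "(\<integral>\<^sup>+\<omega>. ennreal ((1 + \<bar>X \<omega>\<bar>) ^ N) \<partial>M) < \<infinity>"
    using integrableD(2)[OF integrable_scaled_power[of 1 N]] by (simp add: less_top)
  have envelope_nn: "ennreal (indicator (UNIV \<times> {v..w}) z *\<^sub>R envelope N (fst z) (snd z))
      = (\<integral>\<^sup>+\<omega>. ennreal (indicator {v..w} (snd z) * envelope_integrand N (fst z) (snd z) \<omega>) \<partial>M)" for z
  proof -
    have "ennreal (envelope N (fst z) (snd z)) = (\<integral>\<^sup>+\<omega>. ennreal (envelope_integrand N (fst z) (snd z) \<omega>) \<partial>M)"
      unfolding envelope_def
      by (rule nn_integral_eq_integral[symmetric])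
         (auto simp: integrable_envelope_integrand envelope_integrand_nonneg)
    then show ?thesis by (cases z) (auto split: split_indicator)
  qed
  have "(\<integral>\<^sup>+z. ennreal (indicator (UNIV \<times> {v..w}) z *\<^sub>R envelope N (fst z) (snd z)) \<partial>(lborel \<Otimes>\<^sub>M lborel))
      = (\<integral>\<^sup>+z. \<integral>\<^sup>+\<omega>. ennreal (indicator {v..w} (snd z) * envelope_integrand N (fst z) (snd z) \<omega>) \<partial>M
          \<partial>(lborel \<Otimes>\<^sub>M lborel))"
    by (simp only: envelope_nn)
  also have "\<dots> = (\<integral>\<^sup>+\<omega>. \<integral>\<^sup>+z. ennreal (indicator {v..w} (snd z) * envelope_integrand N (fst z) (snd z) \<omega>)
      \<partial>(lborel \<Otimes>\<^sub>M lborel) \<partial>M)"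
    by (rule LM.Fubini[where f="\<lambda>x. ennreal (indicator {v..w} (snd (fst x))
          * envelope_integrand N (fst (fst x)) (snd (fst x)) (snd x))", symmetric, simplified])
       (simp add: envelope_integrand_def)
  also have "\<dots> = (\<integral>\<^sup>+\<omega>. ennreal ((1 + \<bar>X \<omega>\<bar>) ^ N) * (Kg * ennreal (w - v)) \<partial>M)"
    unfolding Kg_def using assms
    by (intro nn_integral_cong) (simp add: nn_integral_envelope_integrand_strip mult.assoc)
  also have "\<dots> = (\<integral>\<^sup>+\<omega>. ennreal ((1 + \<bar>X \<omega>\<bar>) ^ N) \<partial>M) * (Kg * ennreal (w - v))"
    by (rule nn_integral_multc) measurable
  also have "\<dots> < \<infinity>" using X_finite Kg_finite by (simp add: ennreal_mult_less_top)
  finally show ?thesis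
    unfolding set_integrable_def case_prod_beta'
    by (intro integrableI_nonneg) (auto simp: envelope_nonneg)
qed

lemma admissible_set_integrable:
  assumes "admissible f" "v \<le> w"
  shows "set_integrable (lborel \<Otimes>\<^sub>M lborel) (UNIV \<times> {v..w}) (\<lambda>(y, b). f y b)"
  using assms(1)
proof (induction rule: admissible.induct)
  case (fraction js m c)
  define N where "N = sum_list (map (\<lambda>(j, k). j + k) js) * Suc m"
  have "set_integrable (lborel \<Otimes>\<^sub>M lborel) (UNIV \<times> {v..w}) (\<lambda>z. \<bar>c\<bar> * (case z of (y, b) \<Rightarrow> envelope N y b))"
    using envelope_set_integrable[OF assms(2)] by (rule set_integrable_mult_right)
  then show ?case
  proof (rule set_integrable_bound)
    show "set_borel_measurable (lborel \<Otimes>\<^sub>M lborel) (UNIV \<times> {v..w})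
        (\<lambda>(y, b). c * prod_p js y b / p 0 0 y b ^ m)"
      unfolding set_borel_measurable_def case_prod_beta' by measurable
    show "AE z in lborel \<Otimes>\<^sub>M lborel. z \<in> UNIV \<times> {v..w} \<longrightarrow>
        norm ((\<lambda>(y, b). c * prod_p js y b / p 0 0 y b ^ m) z)
        \<le> norm (\<bar>c\<bar> * (case z of (y, b) \<Rightarrow> envelope N y b))"
    proof (intro AE_I2 impI)
      fix z :: "real \<times> real"
      obtain y b where z: "z = (y, b)" by (cases z)
      have "\<bar>c\<bar> * \<bar>prod_p js y b / p 0 0 y b ^ m\<bar> \<le> \<bar>c\<bar> * envelope N y b"
        using fraction_bound[OF fraction] unfolding N_def by (intro mult_left_mono) auto
      then show "norm ((\<lambda>(y, b). c * prod_p js y b / p 0 0 y b ^ m) z)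
          \<le> norm (\<bar>c\<bar> * (case z of (y, b) \<Rightarrow> envelope N y b))"
        using envelope_nonneg[of N y b] unfolding z by (simp add: abs_mult)
    qed
  qed
next
  case (add f g)
  then have "set_integrable (lborel \<Otimes>\<^sub>M lborel) (UNIV \<times> {v..w})
      (\<lambda>z. (case z of (y, b) \<Rightarrow> f y b) + (case z of (y, b) \<Rightarrow> g y b))"
    by (intro set_integral_add(1))
  then show ?case by (simp add: case_prod_beta')
qed

end

theorem lemma2:
  fixes M :: "'s measure" and X :: "'s \<Rightarrow> real" and i :: nat and v w :: real
  assumes "prob_space M"
    and "X \<in> borel_measurable M"
    and "\<And>k::nat. k \<ge> 1 \<Longrightarrow> integrable M (\<lambda>\<omega>. \<bar>X \<omega>\<bar> ^ k)"
    and "v < w"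
  shows "set_integrable (lborel \<Otimes>\<^sub>M lborel) (UNIV \<times> {v..w}) (\<lambda>(y, a). gfun M X i y a)"
proof -
  interpret all_moments M X
    using assms(1-3) by (simp add: all_moments_def all_moments_axioms_def)
  obtain f where f: "admissible f" and g_eq: "\<And>y a. gfun M X i y a = f y a"
    using gfun_admissible by blast
  have "set_integrable (lborel \<Otimes>\<^sub>M lborel) (UNIV \<times> {v..w}) (\<lambda>(y, a). f y a)"
    using admissible_set_integrable[OF f] assms(4) by simp
  then show ?thesis by (simp add: g_eq)
qed

end
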